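(* Let $a_0,a_1,a_2,a_3\in\mathbb{R}$ and consider the binary quartic form $$f(x,y)=-x^4+a_3x^3y+a_2x^2y^2+a_1xy^3+a_0y^4 .$$ Let $$b_1=-\tfrac14\,(4a_0+a_2^2+a_1a_3),\qquad b_2=-\tfrac{a_2}{2},\qquad \lambda_0=\frac{4b_2+2\sqrt{3b_1+4b_2^2}}{3}.$$ Then $f$ is negative semi-definite if and only if $\lambda_0$ is real and the matrix $$\begin{bmatrix}-1&\frac{a_3}{2}&\frac{a_2+\lambda_0}{2}\\[2pt] \frac{a_3}{2}&-\lambda_0&\frac{a_1}{2}\\[2pt] \frac{a_2+\lambda_0}{2}&\frac{a_1}{2}&a_0\end{bmatrix}$$ is negative semi-definite. Likewise, $f$ is negative definite if and only if $\lambda_0$ is real and this matrix is negative definite.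
   Context: A binary form $f(x,y)$ with real coefficients is negative definite (resp. negative semi-definite) if $f(x,y)<0$ (resp. $f(x,y)\le 0$) for all real $x,y$ not both zero. The quantity $\lambda_0$ is real exactly when $3b_1+4b_2^2\ge 0$. *)

theory Defs
  imports "HOL-Analysis.Analysis"
begin

definition neg_semidef_form :: "(real \<Rightarrow> real \<Rightarrow> real) \<Rightarrow> bool" where
  "neg_semidef_form f \<longleftrightarrow> (\<forall>x y. (x, y) \<noteq> (0, 0) \<longrightarrow> f x y \<le> 0)"

definition neg_def_form :: "(real \<Rightarrow> real \<Rightarrow> real) \<Rightarrow> bool" where
  "neg_def_form f \<longleftrightarrow> (\<forall>x y. (x, y) \<noteq> (0, 0) \<longrightarrow> f x y < 0)"

definition neg_semidef_matrix :: "real^'n^'n \<Rightarrow> bool" where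
  "neg_semidef_matrix M \<longleftrightarrow> (\<forall>x. x \<bullet> (M *v x) \<le> 0)"

definition neg_def_matrix :: "real^'n^'n \<Rightarrow> bool" where
  "neg_def_matrix M \<longleftrightarrow> (\<forall>x. x \<noteq> 0 \<longrightarrow> x \<bullet> (M *v x) < 0)"

end

(*
  With P(x) = -f(x,1) = x^4 - a3 x^3 - a2 x^2 - a1 x - a0, the form f is negative
  (semi-)definite iff P is positive (nonnegative) on the reals. For every lambda the
  matrix M(lambda) is a Gram matrix of f in the monomials (x^2, xy, y^2), which gives
  sufficiency. For necessity, expand the nonnegative quartic P around a global minimiser
  x0: P(x) = (x - x0)^2 ((x - u)^2 + q) + m with q, m >= 0. Writing m = z (3z + 2k)/4
  with z >= 0 and k = q + (u - x0)^2 turns 3 b1 + 4 b2^2 into ((3z + k)/2)^2 and lambda0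
  into (x0 + u)^2 + q + z, and then -v^T M(lambda0) v is an explicit sum of squares with
  nonnegative weights, which is positive definite as soon as m > 0.
*)
theory Submission
  imports Defs
begin

definition monic_quartic :: "real \<Rightarrow> real \<Rightarrow> real \<Rightarrow> real \<Rightarrow> real \<Rightarrow> real" where
  "monic_quartic a3 a2 a1 a0 x = x^4 - a3*x^3 - a2*x^2 - a1*x - a0"

lemma monic_quartic_ge_at_0:
  assumes "1 + \<bar>a3\<bar> + \<bar>a2\<bar> + \<bar>a1\<bar> \<le> \<bar>x\<bar>"
  shows "monic_quartic a3 a2 a1 a0 0 \<le> monic_quartic a3 a2 a1 a0 x"
proof -
  define t where "t = \<bar>x\<bar>"
  have t: "1 \<le> t" using assms unfolding t_def by simp
  have "a3*x^3 + a2*x^2 + a1*x \<le> \<bar>a3\<bar>*t^3 + \<bar>a2\<bar>*t^2 + \<bar>a1\<bar>*t"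
    unfolding t_def by (intro add_mono; metis abs_ge_self abs_mult power_abs)
  also have "\<dots> \<le> (\<bar>a3\<bar> + \<bar>a2\<bar> + \<bar>a1\<bar>)*t^3"
  proof -
    have "t^2 \<le> t^3" "t \<le> t^3"
      using t power_increasing[of 2 3 t] power_increasing[of 1 3 t] by auto
    then show ?thesis by (simp add: distrib_right add_mono mult_left_mono)
  qed
  also have "\<dots> \<le> (t - 1)*t^3"
    using assms t unfolding t_def by (intro mult_right_mono) auto
  also have "\<dots> \<le> x^4"
    using t unfolding t_def by (simp add: algebra_simps power_even_abs flip: power_Suc)
  finally show ?thesis unfolding monic_quartic_def by simp
qed

lemma monic_quartic_attains_min:
  obtains x0 where "\<And>x. monic_quartic a3 a2 a1 a0 x0 \<le> monic_quartic a3 a2 a1 a0 x"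
proof -
  define R where "R = 1 + \<bar>a3\<bar> + \<bar>a2\<bar> + \<bar>a1\<bar>"
  let ?P = "monic_quartic a3 a2 a1 a0"
  obtain x0 where x0: "x0 \<in> {-R..R}" "\<And>y. y \<in> {-R..R} \<Longrightarrow> ?P x0 \<le> ?P y"
    using continuous_attains_inf[of "{-R..R}" ?P] R_def
    by (fastforce simp: monic_quartic_def intro!: continuous_intros)
  have "?P x0 \<le> ?P x" for x
  proof (cases "\<bar>x\<bar> \<le> R")
    case True
    then show ?thesis using x0 by (auto simp: abs_le_iff)
  next
    case False
    have "?P x0 \<le> ?P 0" using x0 R_def by auto
    also have "\<dots> \<le> ?P x" using False R_def by (intro monic_quartic_ge_at_0) simp
    finally show ?thesis .
  qed
  then show thesis using that by blast
qed

lemma nonneg_monic_quartic_decomp: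
  assumes nonneg: "\<And>x. 0 \<le> monic_quartic a3 a2 a1 a0 x"
  obtains x0 u q m where "0 \<le> q" "0 \<le> m" "m = monic_quartic a3 a2 a1 a0 x0"
    "a3 = 2*(x0 + u)" "a2 = -((x0 + u)^2 + 2*x0*u + q)" "a1 = 2*x0*((x0 + u)*u + q)"
    "a0 = -(x0^2*(u^2 + q) + m)"
proof -
  let ?P = "monic_quartic a3 a2 a1 a0"
  obtain x0 where min: "\<And>x. ?P x0 \<le> ?P x"
    using monic_quartic_attains_min by blast
  have "DERIV ?P x0 :> 4*x0^3 - 3*a3*x0^2 - 2*a2*x0 - a1"
    unfolding monic_quartic_def
    by (auto intro!: derivative_eq_intros simp: power2_eq_square power3_eq_cube)
  then have "4*x0^3 - 3*a3*x0^2 - 2*a2*x0 - a1 = 0"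
    by (rule DERIV_local_min[of _ _ _ 1]) (use min in auto)
  then have crit: "a1 = 4*x0^3 - 3*a3*x0^2 - 2*a2*x0" by simp
  define u where "u = a3/2 - x0"
  define q where "q = 3*x0^2 - 2*a3*x0 - a2 - u^2"
  define m where "m = ?P x0"
  have a3: "a3 = 2*(x0 + u)" and a2: "a2 = -((x0 + u)^2 + 2*x0*u + q)"
    unfolding u_def q_def by (simp_all add: field_simps power2_eq_square)
  have a1: "a1 = 2*x0*((x0 + u)*u + q)"
    unfolding crit u_def q_def by (simp add: field_simps power2_eq_square power3_eq_cube)
  have a0: "a0 = -(x0^2*(u^2 + q) + m)"
    unfolding m_def monic_quartic_def q_def u_def crit
    by (simp add: field_simps power2_eq_square power3_eq_cube power4_eq_xxxx)
  have factored: "?P x - m = (x - x0)^2*((x - u)^2 + q)" for x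
    unfolding monic_quartic_def a3 a2 a1 a0
    by (simp add: algebra_simps power2_eq_square power3_eq_cube power4_eq_xxxx)
  have gap: "0 \<le> (x - x0)^2*((x - u)^2 + q)" for x
    using min[of x] factored[of x] m_def by simp
  have "0 \<le> q"
  proof (cases "u = x0")
    case False
    then show ?thesis using gap[of u] by (simp add: zero_le_mult_iff)
  next
    case True
    show ?thesis
    proof (rule field_le_epsilon)
      fix e :: real
      assume "0 < e"
      then show "0 \<le> q + e"
        using gap[of "u + sqrt e"] True by (simp add: zero_le_mult_iff)
    qed
  qed
  moreover have "0 \<le> m" using nonneg m_def by simp
  ultimately show thesis using that[OF _ _ m_def a3 a2 a1 a0] by blast
qed

lemma exists_nonneg_root_quadratic:
  fixes k m :: real
  assumes "0 \<le> k" "0 \<le> m"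
  obtains z where "0 \<le> z" "4*m = z*(3*z + 2*k)"
proof
  define r where "r = sqrt (k^2 + 12*m)"
  have "k \<le> r"
    unfolding r_def using assms by (intro real_le_rsqrt) simp
  then show "0 \<le> (r - k)/3" by simp
  have "r^2 = k^2 + 12*m"
    unfolding r_def using assms by simp
  then show "4*m = (r - k)/3*(3*((r - k)/3) + 2*k)"
    by (simp add: field_simps power2_eq_square)
qed

definition gram_matrix :: "real \<Rightarrow> real \<Rightarrow> real \<Rightarrow> real \<Rightarrow> real \<Rightarrow> real^3^3" where
  "gram_matrix a3 a2 a1 a0 lam =
     vector [vector [-1, a3/2, (a2 + lam)/2],
             vector [a3/2, -lam, a1/2],
             vector [(a2 + lam)/2, a1/2, a0]]"

lemma inner_gram_matrix:
  "x \<bullet> (gram_matrix a3 a2 a1 a0 lam *v x) =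
     -(x$1^2 + lam*x$2^2 - a0*x$3^2 - a3*x$1*x$2 - (a2 + lam)*x$1*x$3 - a1*x$2*x$3)"
  by (simp add: gram_matrix_def inner_vec_def matrix_vector_mult_def sum_3 power2_eq_square
      algebra_simps)

lemma quartic_form_eq_gram:
  fixes x y :: real
  defines "w \<equiv> vector [x^2, x*y, y^2] :: real^3"
  shows "- (x^4) + a3*x^3*y + a2*x^2*y^2 + a1*x*y^3 + a0*y^4 =
    w \<bullet> (gram_matrix a3 a2 a1 a0 lam *v w)"
  unfolding inner_gram_matrix w_def by simp algebra

lemma neg_semidef_form_of_gram:
  assumes "neg_semidef_matrix (gram_matrix a3 a2 a1 a0 lam)"
  shows "neg_semidef_form (\<lambda>x y. - (x^4) + a3*x^3*y + a2*x^2*y^2 + a1*x*y^3 + a0*y^4)"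
  using assms quartic_form_eq_gram[where lam = lam]
  unfolding neg_semidef_form_def neg_semidef_matrix_def by simp

lemma neg_def_form_of_gram:
  assumes "neg_def_matrix (gram_matrix a3 a2 a1 a0 lam)"
  shows "neg_def_form (\<lambda>x y. - (x^4) + a3*x^3*y + a2*x^2*y^2 + a1*x*y^3 + a0*y^4)"
proof -
  have "vector [x^2, x*y, y^2] \<noteq> (0 :: real^3)" if "(x, y) \<noteq> (0, 0)" for x y :: real
    using that by (auto simp: vec_eq_iff forall_3)
  then show ?thesis
    using assms quartic_form_eq_gram[where lam = lam]
    unfolding neg_def_form_def neg_def_matrix_def by simp
qed

lemma inner_gram_matrix_sos:
  assumes "a3 = 2*(x0 + u)" "a2 = -((x0 + u)^2 + 2*x0*u + q)" "a1 = 2*x0*((x0 + u)*u + q)"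
    and "a0 = -(x0^2*(u^2 + q) + z*(3*z + 2*(q + (u - x0)^2))/4)"
  shows "x \<bullet> (gram_matrix a3 a2 a1 a0 ((x0 + u)^2 + q + z) *v x) =
     -((x$1 - (x0 + u)*x$2 - (z/2 - x0*u)*x$3)^2 + q*(x$2 - x0*x$3)^2
       + z*(x$2 - (x0 + u)/2*x$3)^2 + z*((u - x0)^2/4 + (z + q)/2)*x$3^2)"
  unfolding inner_gram_matrix assms by (simp add: field_simps power2_eq_square)

lemma gram_matrix_sos_certificate:
  assumes q: "0 \<le> q" and z: "0 \<le> z"
    and coeffs: "a3 = 2*(x0 + u)" "a2 = -((x0 + u)^2 + 2*x0*u + q)" "a1 = 2*x0*((x0 + u)*u + q)"
      "a0 = -(x0^2*(u^2 + q) + z*(3*z + 2*(q + (u - x0)^2))/4)"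
  defines "G \<equiv> gram_matrix a3 a2 a1 a0 ((x0 + u)^2 + q + z)"
  shows "neg_semidef_matrix G" and "0 < z \<Longrightarrow> neg_def_matrix G"
proof -
  note sos = inner_gram_matrix_sos[OF coeffs, folded G_def]
  have weight: "0 \<le> (u - x0)^2/4 + (z + q)/2" using q z by simp
  show "neg_semidef_matrix G"
    unfolding neg_semidef_matrix_def sos neg_le_0_iff_le using q z weight
    by (intro allI add_nonneg_nonneg mult_nonneg_nonneg) auto
  assume "0 < z"
  then have weight_pos: "0 < z*((u - x0)^2/4 + (z + q)/2)"
    using q by (simp add: add_nonneg_pos)
  show "neg_def_matrix G"
    unfolding neg_def_matrix_def
  proof (intro allI impI)
    fix x :: "real^3"
    assume "x \<noteq> 0"
    show "x \<bullet> (G *v x) < 0"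
    proof (rule ccontr)
      assume "\<not> x \<bullet> (G *v x) < 0"
      then have "z*((u - x0)^2/4 + (z + q)/2)*x$3^2 = 0" "z*(x$2 - (x0 + u)/2*x$3)^2 = 0"
          "(x$1 - (x0 + u)*x$2 - (z/2 - x0*u)*x$3)^2 = 0"
        unfolding sos using q z weight
        by (smt (verit) mult_nonneg_nonneg zero_le_power2)+
      then have "x$3 = 0" "x$2 = 0" "x$1 = 0"
        using weight_pos \<open>0 < z\<close> by auto
      then show False using \<open>x \<noteq> 0\<close> by (simp add: vec_eq_iff forall_3)
    qed
  qed
qed

lemma gram_matrix_of_nonneg_monic_quartic:
  fixes a0 a1 a2 a3 :: real
  assumes nonneg: "\<And>x. 0 \<le> monic_quartic a3 a2 a1 a0 x"
  defines "D \<equiv> 3 * (- (1/4) * (4 * a0 + a2^2 + a1 * a3)) + 4 * (- a2 / 2)^2"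
  defines "lam0 \<equiv> (4 * (- a2 / 2) + 2 * sqrt D) / 3"
  shows "0 \<le> D" and "neg_semidef_matrix (gram_matrix a3 a2 a1 a0 lam0)"
    and "(\<And>x. 0 < monic_quartic a3 a2 a1 a0 x) \<Longrightarrow>
      neg_def_matrix (gram_matrix a3 a2 a1 a0 lam0)"
proof -
  obtain x0 u q m where q: "0 \<le> q" and m: "0 \<le> m" "m = monic_quartic a3 a2 a1 a0 x0"
    and a3: "a3 = 2*(x0 + u)" and a2: "a2 = -((x0 + u)^2 + 2*x0*u + q)"
    and a1: "a1 = 2*x0*((x0 + u)*u + q)" and a0: "a0 = -(x0^2*(u^2 + q) + m)"
    by (rule nonneg_monic_quartic_decomp[OF nonneg])
  define k where "k = q + (u - x0)^2"
  have k: "0 \<le> k" using q by (simp add: k_def)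
  obtain z where z: "0 \<le> z" and m_z: "4*m = z*(3*z + 2*k)"
    by (rule exists_nonneg_root_quadratic[OF k m(1)])
  have a0_z: "a0 = -(x0^2*(u^2 + q) + z*(3*z + 2*(q + (u - x0)^2))/4)"
    using a0 m_z k_def by simp
  have D: "D = ((3*z + k)/2)^2"
    unfolding D_def a3 a2 a1 a0_z k_def by (simp add: field_simps power2_eq_square)
  then show "0 \<le> D" by simp
  have sqrt_D: "sqrt D = (3*z + k)/2"
    unfolding D using z k by simp
  have "lam0 = (x0 + u)^2 + q + z"
    unfolding lam0_def sqrt_D a2 k_def by (simp add: field_simps power2_eq_square)
  note certificate = gram_matrix_sos_certificate[OF q z a3 a2 a1 a0_z, folded this]
  show "neg_semidef_matrix (gram_matrix a3 a2 a1 a0 lam0)"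
    by (rule certificate(1))
  assume "\<And>x. 0 < monic_quartic a3 a2 a1 a0 x"
  then have "0 < m" using m(2) by simp
  then have "0 < z" using m_z z by (cases "z = 0") auto
  then show "neg_def_matrix (gram_matrix a3 a2 a1 a0 lam0)"
    by (rule certificate(2))
qed

theorem corollary1:
  fixes a0 a1 a2 a3 :: real
  defines "f \<equiv> (\<lambda>x y. - (x^4) + a3 * x^3 * y + a2 * x^2 * y^2 + a1 * x * y^3 + a0 * y^4)"
      and "b1 \<equiv> - (1/4) * (4 * a0 + a2^2 + a1 * a3)"
      and "b2 \<equiv> - a2 / 2"
  defines "lam0 \<equiv> (4 * b2 + 2 * sqrt (3 * b1 + 4 * b2^2)) / 3"
  defines "M \<equiv> (vector [vector [-1, a3/2, (a2 + lam0)/2],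
                          vector [a3/2, -lam0, a1/2],
                          vector [(a2 + lam0)/2, a1/2, a0]] :: real^3^3)"
  shows "(neg_semidef_form f \<longleftrightarrow> (3 * b1 + 4 * b2^2 \<ge> 0 \<and> neg_semidef_matrix M))
       \<and> (neg_def_form f \<longleftrightarrow> (3 * b1 + 4 * b2^2 \<ge> 0 \<and> neg_def_matrix M))"
proof -
  let ?P = "monic_quartic a3 a2 a1 a0"
  have M: "M = gram_matrix a3 a2 a1 a0 lam0"
    unfolding M_def gram_matrix_def ..
  note necessary = gram_matrix_of_nonneg_monic_quartic[of a3 a2 a1 a0,
      folded b1_def b2_def, folded lam0_def M]
  have sufficient: "neg_semidef_matrix M \<Longrightarrow> neg_semidef_form f"
      "neg_def_matrix M \<Longrightarrow> neg_def_form f"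
    unfolding M f_def by (fact neg_semidef_form_of_gram neg_def_form_of_gram)+
  have f_at_1: "f x 1 = - ?P x" for x
    unfolding f_def monic_quartic_def by simp
  have nonneg: "0 \<le> ?P x" if "neg_semidef_form f" for x
  proof -
    have "f x 1 \<le> 0" using that unfolding neg_semidef_form_def by simp
    then show ?thesis by (simp add: f_at_1)
  qed
  have pos: "0 < ?P x" if "neg_def_form f" for x
  proof -
    have "f x 1 < 0" using that unfolding neg_def_form_def by simp
    then show ?thesis by (simp add: f_at_1)
  qed
  show ?thesis
    using necessary nonneg pos sufficient by (meson less_imp_le)
qed

end
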